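(* Let $h\ge 2$, $1\le t\le 2h-1$, and let $f_1,\dots,f_t$ be positive integers with $f_1+\dots+f_t\le 2h$. For a positive integer $n$, let $R^{\mathrm{Dist}}(n)$ be the largest integer $q\ge 0$ such that there exist $qt$ pairwise distinct elements $d_1,\dots,d_{qt}\in B$ with $f_1d_{jt+1}+\dots+f_td_{jt+t}=n$ for every $0\le j\le q-1$. Then with probability $1$, $R^{\mathrm{Dist}}(n)\le 4h$ for all sufficiently large $n$.
   Context: Fix an integer $h\ge 2$. Let $B$ be a random set of positive integers in which the events $\{n\in B\}$, $n=1,2,\dots$, are mutually independent and $\mathbb{P}(n\in B)=n^{-\frac{4h-3}{4h-1}}$. *)

theory Defs
  imports "HOL-Probability.Probability"
begin

text \<open>Coefficients are indexed f 0, ..., f (t-1) (i.e. f_{i+1} of the paper is f i).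
  dist_reps B f t n q: there are q*t pairwise distinct elements d 0, ..., d (q*t-1) of B
  such that for every j < q, sum over i < t of f i * d (j*t+i) equals n.\<close>

definition dist_reps :: "nat set \<Rightarrow> (nat \<Rightarrow> nat) \<Rightarrow> nat \<Rightarrow> nat \<Rightarrow> nat \<Rightarrow> bool" where
  "dist_reps B f t n q \<longleftrightarrow>
     (\<exists>d :: nat \<Rightarrow> nat. inj_on d {..<q*t} \<and> d ` {..<q*t} \<subseteq> B \<and>
        (\<forall>j<q. (\<Sum>i<t. f i * d (j*t+i)) = n))"

text \<open>R^Dist(n): the largest q \<ge> 0 with dist_reps (well defined when B consists of
  positive integers and all f i are positive, since then q*t \<le> n).\<close>
definition RDist :: "nat set \<Rightarrow> (nat \<Rightarrow> nat) \<Rightarrow> nat \<Rightarrow> nat \<Rightarrow> nat" where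
  "RDist B f t n = (GREATEST q. dist_reps B f t n q)"

end

theory Submission
  imports Defs
begin

text \<open>Let \<open>\<alpha> = (4h-3)/(4h-1)\<close> and \<open>q = 4h+1\<close>. If \<open>R^Dist(n) \<ge> q\<close>, then B contains the entries of
  an injective tuple forming q representations of n; by independence a fixed such tuple lies in B
  with probability \<open>\<Prod> d\<^sub>k^(-\<alpha>)\<close>, so the union bound gives \<open>P(R^Dist(n) \<ge> q) \<le> S(n)^q\<close> with
  \<open>S(n) = \<Sum>\<^sub>e \<Prod>\<^sub>i e\<^sub>i^(-\<alpha>)\<close> over single representations e of n. In every representation some
  \<open>e\<^sub>m \<ge> n / \<Sum>f\<close>, and \<open>e\<^sub>m\<close> is determined by the other \<open>t-1\<close> entries, whence
  \<open>S(n) \<lesssim> n^(-\<alpha>) (n^(1-\<alpha>))^(t-1) \<le> n^(-1/(4h-1))\<close> because \<open>t \<le> 2h-1\<close>. Hence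
  \<open>P(R^Dist(n) > 4h) \<lesssim> n^(-(4h+1)/(4h-1))\<close> is summable, and Borel--Cantelli applies.\<close>

lemma powr_diff_ge:
  fixes a :: real and n :: nat
  assumes "0 \<le> a" "a \<le> 1" "n \<ge> 1"
  shows "(1 - a) * real (Suc n) powr (-a) \<le> real (Suc n) powr (1 - a) - real n powr (1 - a)"
proof -
  have "\<exists>z. real n < z \<and> z < real (Suc n) \<and>
      real (Suc n) powr (1 - a) - real n powr (1 - a)
        = (real (Suc n) - real n) * ((1 - a) * z powr (1 - a - 1))"
  proof (rule MVT2)
    fix x assume "real n \<le> x" "x \<le> real (Suc n)"
    then have "x > 0" using assms by auto
    then show "((\<lambda>x. x powr (1 - a)) has_real_derivative (1 - a) * x powr (1 - a - 1)) (at x)"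
      by (rule has_real_derivative_powr)
  qed simp
  then obtain z where z: "real n < z" "z < real (Suc n)"
    and mvt: "real (Suc n) powr (1 - a) - real n powr (1 - a) = (1 - a) * z powr (-a)"
    by auto
  have "real (Suc n) powr (-a) \<le> z powr (-a)"
    using z assms by (intro powr_mono2') auto
  then show ?thesis
    using mvt assms by (simp add: mult_left_mono)
qed

lemma sum_powr_neg_le:
  fixes a :: real
  assumes "0 \<le> a" "a < 1"
  shows "(\<Sum>x = 1..n. real x powr (-a)) \<le> real n powr (1 - a) / (1 - a)"
proof (induction n)
  case (Suc n)
  show ?case
  proof (cases "n = 0")
    case False
    have "(\<Sum>x = 1..Suc n. real x powr (-a)) = (\<Sum>x = 1..n. real x powr (-a)) + real (Suc n) powr (-a)"
      by simp
    also have "\<dots> \<le> real n powr (1 - a) / (1 - a)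
        + (real (Suc n) powr (1 - a) - real n powr (1 - a)) / (1 - a)"
      using Suc.IH powr_diff_ge[of a n] False assms
      by (intro add_mono) (auto simp: pos_le_divide_eq mult.commute)
    also have "\<dots> = real (Suc n) powr (1 - a) / (1 - a)"
      by (simp add: diff_divide_distrib)
    finally show ?thesis .
  qed (use assms in simp)
qed simp

lemma ex_weighted_sum_le:
  fixes f e :: "nat \<Rightarrow> nat"
  assumes "t \<ge> 1"
  shows "\<exists>m<t. (\<Sum>i<t. f i * e i) \<le> (\<Sum>i<t. f i) * e m"
proof -
  have "Max (e ` {..<t}) \<in> e ` {..<t}"
    using assms by (intro Max_in) (auto simp: lessThan_empty_iff)
  then obtain m where m: "m < t" "e m = Max (e ` {..<t})" by auto
  have max: "e i \<le> e m" if "i < t" for i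
    unfolding m(2) using that by (intro Max_ge) auto
  have "(\<Sum>i<t. f i * e i) \<le> (\<Sum>i<t. f i * e m)"
    using max by (intro sum_mono mult_left_mono) auto
  with m(1) show ?thesis by (auto simp: sum_distrib_right)
qed

definition reps :: "(nat \<Rightarrow> nat) \<Rightarrow> nat \<Rightarrow> nat \<Rightarrow> (nat \<Rightarrow> nat) set" where
  "reps f t n = {e \<in> {..<t} \<rightarrow>\<^sub>E {1..n}. (\<Sum>i<t. f i * e i) = n}"

definition block_reps :: "(nat \<Rightarrow> nat) \<Rightarrow> nat \<Rightarrow> nat \<Rightarrow> nat \<Rightarrow> (nat \<Rightarrow> nat) set" where
  "block_reps f t q n = {d \<in> {..<q*t} \<rightarrow>\<^sub>E {1..n}. \<forall>j<q. (\<Sum>i<t. f i * d (j*t + i)) = n}"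

lemma finite_reps [simp]: "finite (reps f t n)"
  unfolding reps_def by (rule finite_subset[of _ "{..<t} \<rightarrow>\<^sub>E {1..n}"]) (auto intro: finite_PiE)

lemma finite_block_reps [simp]: "finite (block_reps f t q n)"
  unfolding block_reps_def
  by (rule finite_subset[of _ "{..<q*t} \<rightarrow>\<^sub>E {1..n}"]) (auto intro: finite_PiE)

lemma block_reps_values: "d \<in> block_reps f t q n \<Longrightarrow> k < q*t \<Longrightarrow> d k \<in> {1..n}"
  unfolding block_reps_def by blast

lemma sum_prod_le_power_sum_if_inj:
  fixes w :: "'b \<Rightarrow> real"
  assumes "inj_on \<phi> D" "\<phi> ` D \<subseteq> I \<rightarrow>\<^sub>E X" "finite I" "finite X" "\<And>x. x \<in> X \<Longrightarrow> w x \<ge> 0"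
  shows "(\<Sum>d\<in>D. \<Prod>i\<in>I. w (\<phi> d i)) \<le> (\<Sum>x\<in>X. w x) ^ card I"
proof -
  have "(\<Sum>d\<in>D. \<Prod>i\<in>I. w (\<phi> d i)) = (\<Sum>g\<in>\<phi> ` D. \<Prod>i\<in>I. w (g i))"
    by (simp add: sum.reindex[OF assms(1)])
  also have "\<dots> \<le> (\<Sum>g\<in>I \<rightarrow>\<^sub>E X. \<Prod>i\<in>I. w (g i))"
    using assms(2-5) by (intro sum_mono2 finite_PiE prod_nonneg) (auto simp: PiE_iff)
  also have "\<dots> = (\<Prod>i\<in>I. \<Sum>x\<in>X. w x)"
    using prod_sum_PiE[of I "\<lambda>_. X" "\<lambda>_ x. w x"] assms(3,4) by simp
  finally show ?thesis by simp
qed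

lemma reps_restrict_inj_on:
  assumes "m < t" "f m > 0"
  shows "inj_on (\<lambda>e. restrict e ({..<t} - {m})) (reps f t n)"
proof (rule inj_onI)
  fix e1 e2
  assume e1: "e1 \<in> reps f t n" and e2: "e2 \<in> reps f t n"
    and eq: "restrict e1 ({..<t} - {m}) = restrict e2 ({..<t} - {m})"
  have agree: "e1 i = e2 i" if "i < t" "i \<noteq> m" for i
    using fun_cong[OF eq, of i] that by simp
  have "(\<Sum>i<t. f i * e i) = f m * e m + (\<Sum>i\<in>{..<t} - {m}. f i * e i)" for e :: "nat \<Rightarrow> nat"
    using assms(1) by (simp add: sum.remove)
  then have "f m * e1 m = f m * e2 m"
    using e1 e2 agree by (auto simp: reps_def intro!: sum.cong)
  then have "e1 m = e2 m" using assms(2) by simp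
  show "e1 = e2"
  proof (rule extensionalityI)
    show "e1 \<in> extensional {..<t}" "e2 \<in> extensional {..<t}"
      using e1 e2 by (simp_all add: reps_def PiE_def)
    show "e1 i = e2 i" if "i \<in> {..<t}" for i
      using agree \<open>e1 m = e2 m\<close> that by (cases "i = m") auto
  qed
qed

text \<open>Bounding \<open>e\<^sub>m\<close> from below and letting the remaining \<open>t - 1\<close> coordinates, which determine
  \<open>e\<^sub>m\<close>, range freely over \<open>{1..n}\<close>.\<close>
lemma sum_prod_reps_large_le:
  fixes a :: real
  assumes a: "0 \<le> a" "a < 1" and m: "m < t" "f m > 0" and "F > 0" "n \<ge> 1"
  shows "(\<Sum>e\<in>{e \<in> reps f t n. n \<le> F * e m}. \<Prod>i<t. real (e i) powr (-a))
    \<le> (real n / real F) powr (-a) * (real n powr (1 - a) / (1 - a)) ^ (t - 1)"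
proof -
  define I where "I = {..<t} - {m}"
  define T where "T = {e \<in> reps f t n. n \<le> F * e m}"
  have "(\<Sum>e\<in>T. \<Prod>i<t. real (e i) powr (-a))
      \<le> (\<Sum>e\<in>T. (real n / real F) powr (-a) * (\<Prod>i\<in>I. real (e i) powr (-a)))"
  proof (rule sum_mono)
    fix e assume e: "e \<in> T"
    then have "real n / real F \<le> real (e m)"
      using \<open>F > 0\<close> by (simp add: T_def divide_le_eq mult.commute flip: of_nat_mult)
    then have "real (e m) powr (-a) \<le> (real n / real F) powr (-a)"
      using assms by (intro powr_mono2') auto
    then show "(\<Prod>i<t. real (e i) powr (-a))
        \<le> (real n / real F) powr (-a) * (\<Prod>i\<in>I. real (e i) powr (-a))"
      using m by (simp add: I_def prod.remove mult_right_mono prod_nonneg)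
  qed
  also have "\<dots> = (real n / real F) powr (-a) * (\<Sum>e\<in>T. \<Prod>i\<in>I. real (restrict e I i) powr (-a))"
    by (simp add: sum_distrib_left)
  also have "(\<Sum>e\<in>T. \<Prod>i\<in>I. real (restrict e I i) powr (-a))
      \<le> (\<Sum>x = 1..n. real x powr (-a)) ^ card I"
  proof (rule sum_prod_le_power_sum_if_inj)
    show "inj_on (\<lambda>e. restrict e I) T"
      unfolding I_def T_def by (rule inj_on_subset[OF reps_restrict_inj_on[of m t f n, OF m]]) auto
    have "e i \<in> {1..n}" if "e \<in> T" "i \<in> I" for e i
      using that by (auto simp: T_def reps_def I_def PiE_iff)
    then show "(\<lambda>e. restrict e I) ` T \<subseteq> I \<rightarrow>\<^sub>E {1..n}"
      by (auto simp: restrict_PiE_iff)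
  qed (auto simp: I_def)
  also have "card I = t - 1" using m by (simp add: I_def)
  also have "(\<Sum>x = 1..n. real x powr (-a)) ^ (t - 1) \<le> (real n powr (1 - a) / (1 - a)) ^ (t - 1)"
    using a by (intro power_mono sum_powr_neg_le sum_nonneg) auto
  finally show ?thesis
    unfolding T_def by (simp add: mult_left_mono)
qed

lemma sum_prod_reps_le:
  fixes a :: real
  assumes a: "0 \<le> a" "a < 1" and "t \<ge> 1" and f: "\<And>i. i < t \<Longrightarrow> f i > 0" and "n \<ge> 1"
  shows "(\<Sum>e\<in>reps f t n. \<Prod>i<t. real (e i) powr (-a))
    \<le> real t * real (\<Sum>i<t. f i) powr a / (1 - a) ^ (t - 1) * real n powr (real (t - 1) * (1 - a) - a)"
proof -
  define F where "F = (\<Sum>i<t. f i)"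
  define W where "W e = (\<Prod>i<t. real (e i) powr (-a))" for e :: "nat \<Rightarrow> nat"
  have "F > 0"
    unfolding F_def using f \<open>t \<ge> 1\<close> by (intro sum_pos2[of _ 0]) auto
  have "W e \<le> (\<Sum>m<t. if n \<le> F * e m then W e else 0)" if e: "e \<in> reps f t n" for e
  proof -
    obtain m where m: "m < t" "n \<le> F * e m"
      using ex_weighted_sum_le[OF \<open>t \<ge> 1\<close>, of f e] e by (auto simp: reps_def F_def)
    then have "W e = (if n \<le> F * e m then W e else 0)" by simp
    also have "\<dots> \<le> (\<Sum>m<t. if n \<le> F * e m then W e else 0)"
      using m by (intro member_le_sum) (auto simp: W_def prod_nonneg)
    finally show ?thesis .
  qed
  then have "sum W (reps f t n) \<le> (\<Sum>e\<in>reps f t n. \<Sum>m<t. if n \<le> F * e m then W e else 0)"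
    by (rule sum_mono)
  also have "\<dots> = (\<Sum>m<t. \<Sum>e\<in>{e \<in> reps f t n. n \<le> F * e m}. W e)"
    by (subst sum.swap) (simp add: sum.inter_filter)
  also have "\<dots> \<le> (\<Sum>m<t. (real n / real F) powr (-a) * (real n powr (1 - a) / (1 - a)) ^ (t - 1))"
    unfolding W_def using assms \<open>F > 0\<close> by (intro sum_mono sum_prod_reps_large_le) auto
  also have "\<dots> = real t * real F powr a / (1 - a) ^ (t - 1) * real n powr (real (t - 1) * (1 - a) - a)"
  proof -
    have "(real n / real F) powr (-a) = real F powr a * real n powr (-a)"
      using \<open>F > 0\<close> by (simp add: powr_divide powr_minus_divide)
    moreover have "(real n powr (1 - a) / (1 - a)) ^ (t - 1)
        = real n powr (real (t - 1) * (1 - a)) / (1 - a) ^ (t - 1)"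
      using \<open>n \<ge> 1\<close> by (simp add: power_divide powr_power)
    moreover have "real n powr (real (t - 1) * (1 - a) - a)
        = real n powr (-a) * real n powr (real (t - 1) * (1 - a))"
      by (simp add: powr_add[symmetric])
    ultimately show ?thesis
      using \<open>t \<ge> 1\<close> by (simp add: of_nat_diff)
  qed
  finally show ?thesis by (simp add: W_def F_def)
qed

lemma prod_lessThan_mult_blocks:
  fixes g :: "nat \<Rightarrow> 'a :: comm_monoid_mult"
  shows "(\<Prod>k<q*t. g k) = (\<Prod>j<q. \<Prod>i<t. g (j*t + i))"
proof -
  have "(\<Prod>k\<in>{j*t..<j*t + t}. g k) = (\<Prod>i<t. g (j*t + i))" for j
    using prod.shift_bounds_nat_ivl[of g 0 "j*t" t] by (simp add: atLeast0LessThan add.commute)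
  then show ?thesis by (simp flip: prod.nat_group)
qed

lemma block_index_less:
  fixes i j t q :: nat
  assumes "j < q" "i < t"
  shows "j*t + i < q*t"
proof -
  have "j*t + i < Suc j * t" using assms(2) by simp
  also have "\<dots> \<le> q*t" using assms(1) by (intro mult_le_mono1) simp
  finally show ?thesis .
qed

lemma sum_prod_block_reps_le:
  fixes w :: "nat \<Rightarrow> real"
  assumes w: "\<And>x. w x \<ge> 0" and "t \<ge> 1"
  shows "(\<Sum>d\<in>block_reps f t q n. \<Prod>k<q*t. w (d k)) \<le> (\<Sum>e\<in>reps f t n. \<Prod>i<t. w (e i)) ^ q"
proof -
  define \<phi> where "\<phi> d = (\<lambda>j\<in>{..<q}. \<lambda>i\<in>{..<t}. d (j*t + i))" for d :: "nat \<Rightarrow> nat"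
  have "inj_on \<phi> (block_reps f t q n)"
  proof (rule inj_onI)
    fix d1 d2 assume d: "d1 \<in> block_reps f t q n" "d2 \<in> block_reps f t q n" and "\<phi> d1 = \<phi> d2"
    show "d1 = d2"
    proof (rule extensionalityI)
      show "d1 \<in> extensional {..<q*t}" "d2 \<in> extensional {..<q*t}"
        using d by (simp_all add: block_reps_def PiE_def)
      fix k assume "k \<in> {..<q*t}"
      then have "k div t < q" "k mod t < t"
        using \<open>t \<ge> 1\<close> by (auto simp: less_mult_imp_div_less)
      then have "\<phi> d1 (k div t) (k mod t) = d1 k" "\<phi> d2 (k div t) (k mod t) = d2 k"
        by (simp_all add: \<phi>_def mult.commute[of _ t])
      with \<open>\<phi> d1 = \<phi> d2\<close> show "d1 k = d2 k" by simp
    qed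
  qed
  moreover have "\<phi> d j \<in> reps f t n" if "d \<in> block_reps f t q n" "j < q" for d j
  proof -
    have "(\<Sum>i<t. f i * \<phi> d j i) = (\<Sum>i<t. f i * d (j*t + i))"
      using \<open>j < q\<close> by (intro sum.cong) (auto simp: \<phi>_def)
    with that show ?thesis
      by (auto simp: \<phi>_def block_reps_def reps_def PiE_iff block_index_less)
  qed
  then have "\<phi> ` block_reps f t q n \<subseteq> {..<q} \<rightarrow>\<^sub>E reps f t n"
    by (auto simp: \<phi>_def PiE_iff)
  ultimately have "(\<Sum>d\<in>block_reps f t q n. \<Prod>j<q. \<Prod>i<t. w (\<phi> d j i))
      \<le> (\<Sum>e\<in>reps f t n. \<Prod>i<t. w (e i)) ^ card {..<q}"
    by (intro sum_prod_le_power_sum_if_inj) (auto intro: prod_nonneg w)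
  then show ?thesis
    by (simp add: prod_lessThan_mult_blocks \<phi>_def)
qed

lemma dist_reps_mono:
  assumes "dist_reps Bs f t n q" "q' \<le> q"
  shows "dist_reps Bs f t n q'"
proof -
  obtain d where d: "inj_on d {..<q*t}" "d ` {..<q*t} \<subseteq> Bs"
    "\<forall>j<q. (\<Sum>i<t. f i * d (j*t + i)) = n"
    using assms(1) unfolding dist_reps_def by blast
  have sub: "{..<q'*t} \<subseteq> {..<q*t}"
    using assms(2) by (simp add: mult_le_mono1)
  have "inj_on d {..<q'*t}" "d ` {..<q'*t} \<subseteq> Bs" "\<forall>j<q'. (\<Sum>i<t. f i * d (j*t + i)) = n"
    using inj_on_subset[OF d(1) sub] image_mono[OF sub, of d] d(2,3) assms(2) by auto
  then show ?thesis
    unfolding dist_reps_def by blast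
qed

lemma RDist_less:
  assumes "\<not> dist_reps Bs f t n q"
  shows "RDist Bs f t n < q"
proof -
  have bound: "q' < q" if "dist_reps Bs f t n q'" for q'
    using dist_reps_mono[OF that] assms by (meson not_less)
  have "dist_reps Bs f t n 0"
    unfolding dist_reps_def by auto
  then have "dist_reps Bs f t n (RDist Bs f t n)"
    unfolding RDist_def by (rule GreatestI_nat) (use bound in \<open>auto intro: less_imp_le\<close>)
  then show ?thesis by (rule bound)
qed

lemma dist_reps_iff_block_reps:
  assumes "Bs \<subseteq> {1..}" and f: "\<And>i. i < t \<Longrightarrow> f i > 0"
  shows "dist_reps Bs f t n q \<longleftrightarrow> (\<exists>d\<in>block_reps f t q n. inj_on d {..<q*t} \<and> d ` {..<q*t} \<subseteq> Bs)"
proof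
  assume "dist_reps Bs f t n q"
  then obtain d where d: "inj_on d {..<q*t}" "d ` {..<q*t} \<subseteq> Bs"
    and sums: "\<forall>j<q. (\<Sum>i<t. f i * d (j*t + i)) = n"
    unfolding dist_reps_def by blast
  have "d k \<in> {1..n}" if "k < q*t" for k
  proof -
    have "t > 0" using that by (cases t) auto
    with that have j: "k div t < q" and i: "k mod t < t"
      by (auto simp: less_mult_imp_div_less)
    have "d k \<le> f (k mod t) * d k"
      using f[OF i] by simp
    also have "\<dots> = f (k mod t) * d ((k div t)*t + k mod t)"
      by simp
    also have "\<dots> \<le> (\<Sum>i<t. f i * d ((k div t)*t + i))"
      using i by (intro member_le_sum) auto
    also have "\<dots> = n"
      using sums j by blast
    finally have "d k \<le> n" .
    moreover have "d k \<in> Bs"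
      using d(2) that by blast
    ultimately show ?thesis
      using assms(1) by auto
  qed
  moreover have "(\<Sum>i<t. f i * restrict d {..<q*t} (j*t + i)) = n" if "j < q" for j
    using sums that by (simp add: block_index_less)
  ultimately have "restrict d {..<q*t} \<in> block_reps f t q n"
    by (simp add: block_reps_def restrict_PiE_iff)
  with d show "\<exists>d\<in>block_reps f t q n. inj_on d {..<q*t} \<and> d ` {..<q*t} \<subseteq> Bs"
    by (intro bexI[of _ "restrict d {..<q*t}"]) simp_all
next
  assume "\<exists>d\<in>block_reps f t q n. inj_on d {..<q*t} \<and> d ` {..<q*t} \<subseteq> Bs"
  then obtain d where "d \<in> block_reps f t q n" "inj_on d {..<q*t}" "d ` {..<q*t} \<subseteq> Bs"
    by blast
  then show "dist_reps Bs f t n q"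
    unfolding dist_reps_def by (intro exI[of _ d]) (simp add: block_reps_def)
qed

lemma (in prob_space) prob_UN_INT_indep_le:
  assumes indep: "indep_events A I" and "finite D" "finite K" "K \<noteq> {}"
    and "\<And>d. d \<in> D \<Longrightarrow> inj_on d K" "\<And>d. d \<in> D \<Longrightarrow> d ` K \<subseteq> I"
  shows "prob (\<Union>d\<in>D. \<Inter>k\<in>K. A (d k)) \<le> (\<Sum>d\<in>D. \<Prod>k\<in>K. prob (A (d k)))"
proof -
  have A_events: "A ` I \<subseteq> events"
    using indep by (simp add: indep_events_def)
  have prob_INT: "prob (\<Inter>k\<in>K. A (d k)) = (\<Prod>k\<in>K. prob (A (d k)))" if "d \<in> D" for d
  proof -
    have "\<forall>J\<subseteq>I. J \<noteq> {} \<longrightarrow> finite J \<longrightarrow> prob (\<Inter>j\<in>J. A j) = (\<Prod>j\<in>J. prob (A j))"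
      using indep by (simp add: indep_events_def)
    then have "prob (\<Inter>j\<in>d ` K. A j) = (\<Prod>j\<in>d ` K. prob (A j))"
      using assms(3,4) assms(6)[OF that] by blast
    then show ?thesis
      by (simp add: prod.reindex[OF assms(5)[OF that]] image_image)
  qed
  have "(\<Inter>k\<in>K. A (d k)) \<in> events" if "d \<in> D" for d
    using A_events assms(3,4) assms(6)[OF that] by (intro sets.finite_INT) auto
  then have "prob (\<Union>d\<in>D. \<Inter>k\<in>K. A (d k)) \<le> (\<Sum>d\<in>D. prob (\<Inter>k\<in>K. A (d k)))"
    using \<open>finite D\<close> by (intro finite_measure_subadditive_finite) auto
  also have "\<dots> = (\<Sum>d\<in>D. \<Prod>k\<in>K. prob (A (d k)))"
    using prob_INT by (rule sum.cong[OF refl])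
  finally show ?thesis .
qed

locale indep_random_set = prob_space M for M :: "'a measure" +
  fixes B :: "'a \<Rightarrow> nat set"
  assumes random_set_positive: "\<And>\<omega>. \<omega> \<in> space M \<Longrightarrow> B \<omega> \<subseteq> {1..}"
    and indep_membership: "indep_events (\<lambda>n. {\<omega> \<in> space M. n \<in> B \<omega>}) {1..}"
begin

lemma membership_event: "n \<ge> 1 \<Longrightarrow> {\<omega> \<in> space M. n \<in> B \<omega>} \<in> events"
  using indep_membership by (auto simp: indep_events_def)

lemma dist_reps_event_eq:
  assumes "q \<ge> 1" "t \<ge> 1" "\<And>i. i < t \<Longrightarrow> f i > 0"
  shows "{\<omega> \<in> space M. dist_reps (B \<omega>) f t n q}
    = (\<Union>d\<in>{d \<in> block_reps f t q n. inj_on d {..<q*t}}. \<Inter>k<q*t. {\<omega> \<in> space M. d k \<in> B \<omega>})"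
    (is "?E = ?U")
proof (intro equalityI subsetI)
  have iff: "dist_reps (B \<omega>) f t n q
      \<longleftrightarrow> (\<exists>d\<in>block_reps f t q n. inj_on d {..<q*t} \<and> d ` {..<q*t} \<subseteq> B \<omega>)"
    if "\<omega> \<in> space M" for \<omega>
    using random_set_positive[OF that] assms(3) by (rule dist_reps_iff_block_reps)
  fix \<omega>
  show "\<omega> \<in> ?U" if "\<omega> \<in> ?E"
    using that iff by (auto simp: image_subset_iff)
  show "\<omega> \<in> ?E" if "\<omega> \<in> ?U"
  proof -
    obtain d where d: "d \<in> block_reps f t q n" "inj_on d {..<q*t}"
      and mem: "\<forall>k<q*t. \<omega> \<in> space M \<and> d k \<in> B \<omega>"
      using \<open>\<omega> \<in> ?U\<close> by auto
    have "\<omega> \<in> space M" using mem[rule_format, of 0] assms(1,2) by (simp add: Suc_le_eq)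
    with d mem iff show ?thesis by (auto simp: image_subset_iff)
  qed
qed

lemma dist_reps_event:
  assumes "q \<ge> 1" "t \<ge> 1" "\<And>i. i < t \<Longrightarrow> f i > 0"
  shows "{\<omega> \<in> space M. dist_reps (B \<omega>) f t n q} \<in> events"
proof -
  have "{\<omega> \<in> space M. d k \<in> B \<omega>} \<in> events" if "d \<in> block_reps f t q n" "k < q*t" for d k
    using block_reps_values[OF that] by (intro membership_event) simp
  then have "(\<Union>d\<in>{d \<in> block_reps f t q n. inj_on d {..<q*t}}. \<Inter>k<q*t. {\<omega> \<in> space M. d k \<in> B \<omega>})
      \<in> events"
    using assms(1,2) by (intro sets.finite_UN sets.finite_INT) (auto simp: lessThan_empty_iff)
  then show ?thesis
    by (simp only: dist_reps_event_eq[OF assms])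
qed

lemma prob_dist_reps_le:
  assumes "q \<ge> 1" "t \<ge> 1" "\<And>i. i < t \<Longrightarrow> f i > 0"
  shows "prob {\<omega> \<in> space M. dist_reps (B \<omega>) f t n q}
    \<le> (\<Sum>e\<in>reps f t n. \<Prod>i<t. prob {\<omega> \<in> space M. e i \<in> B \<omega>}) ^ q"
proof -
  let ?A = "\<lambda>n. {\<omega> \<in> space M. n \<in> B \<omega>}"
  have "prob {\<omega> \<in> space M. dist_reps (B \<omega>) f t n q}
      = prob (\<Union>d\<in>{d \<in> block_reps f t q n. inj_on d {..<q*t}}. \<Inter>k<q*t. ?A (d k))"
    by (simp only: dist_reps_event_eq[OF assms])
  also have "\<dots> \<le> (\<Sum>d\<in>{d \<in> block_reps f t q n. inj_on d {..<q*t}}. \<Prod>k<q*t. prob (?A (d k)))"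
    using assms(1,2) block_reps_values
    by (intro prob_UN_INT_indep_le[OF indep_membership]) (auto simp: lessThan_empty_iff)
  also have "\<dots> \<le> (\<Sum>d\<in>block_reps f t q n. \<Prod>k<q*t. prob (?A (d k)))"
    by (intro sum_mono2 prod_nonneg) auto
  also have "\<dots> \<le> (\<Sum>e\<in>reps f t n. \<Prod>i<t. prob (?A (e i))) ^ q"
    using assms(2) by (intro sum_prod_block_reps_le) auto
  finally show ?thesis .
qed

theorem AE_eventually_RDist_less:
  fixes a :: real
  assumes prob_membership: "\<And>n. n \<ge> 1 \<Longrightarrow> prob {\<omega> \<in> space M. n \<in> B \<omega>} = real n powr (-a)"
    and a: "0 < a" "a < 1" and t: "t \<ge> 1" and f: "\<And>i. i < t \<Longrightarrow> f i > 0"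
    and q: "real q * (a - real (t - 1) * (1 - a)) > 1"
  shows "AE \<omega> in M. \<forall>\<^sub>F n in sequentially. RDist (B \<omega>) f t n < q"
proof -
  define E where "E n = {\<omega> \<in> space M. dist_reps (B \<omega>) f t n q}" for n
  define C where "C = real t * real (\<Sum>i<t. f i) powr a / (1 - a) ^ (t - 1)"
  define \<gamma> where "\<gamma> = a - real (t - 1) * (1 - a)"
  have "q \<ge> 1" using q by (cases q) auto
  have prob_E: "prob (E n) \<le> C ^ q * real n powr (- (\<gamma> * q))" if "n \<ge> 1" for n
  proof -
    have "(\<Sum>e\<in>reps f t n. \<Prod>i<t. prob {\<omega> \<in> space M. e i \<in> B \<omega>})
        = (\<Sum>e\<in>reps f t n. \<Prod>i<t. real (e i) powr (-a))"
      by (intro sum.cong prod.cong refl prob_membership) (auto simp: reps_def PiE_iff)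
    also have "\<dots> \<le> C * real n powr (-\<gamma>)"
      using sum_prod_reps_le[of a t f n] a t f that by (simp add: C_def \<gamma>_def)
    finally have S: "(\<Sum>e\<in>reps f t n. \<Prod>i<t. prob {\<omega> \<in> space M. e i \<in> B \<omega>})
        \<le> C * real n powr (-\<gamma>)" .
    have "prob (E n) \<le> (\<Sum>e\<in>reps f t n. \<Prod>i<t. prob {\<omega> \<in> space M. e i \<in> B \<omega>}) ^ q"
      unfolding E_def using \<open>q \<ge> 1\<close> t f by (rule prob_dist_reps_le)
    also have "\<dots> \<le> (C * real n powr (-\<gamma>)) ^ q"
      using S by (intro power_mono sum_nonneg prod_nonneg) auto
    also have "\<dots> = C ^ q * real n powr (- (\<gamma> * q))"
      using that by (simp add: power_mult_distrib powr_power mult.commute)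
    finally show ?thesis .
  qed
  have "summable (\<lambda>n. C ^ q * real n powr (- (\<gamma> * q)))"
    using q by (intro summable_mult) (simp add: summable_real_powr_iff \<gamma>_def mult.commute)
  moreover have "\<forall>\<^sub>F n in sequentially. norm (prob (E n)) \<le> C ^ q * real n powr (- (\<gamma> * q))"
    using eventually_ge_at_top[of 1] by eventually_elim (simp add: prob_E)
  ultimately have "summable (\<lambda>n. prob (E n))"
    by (rule summable_comparison_test_ev[rotated])
  moreover have "E n \<in> events" for n
    unfolding E_def using \<open>q \<ge> 1\<close> t f by (rule dist_reps_event)
  ultimately have "AE \<omega> in M. \<forall>\<^sub>F n in sequentially. \<omega> \<in> space M - E n"
    by (intro borel_cantelli_AE1) (simp_all add: less_top[symmetric])
  moreover have "\<forall>\<^sub>F n in sequentially. RDist (B \<omega>) f t n < q"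
    if "\<forall>\<^sub>F n in sequentially. \<omega> \<in> space M - E n" for \<omega>
    using that by (rule eventually_mono) (intro RDist_less, simp add: E_def)
  ultimately show ?thesis
    by (rule eventually_mono)
qed

end

lemma exponent_gap_gt_one:
  fixes h t :: nat
  assumes "h \<ge> 2" "1 \<le> t" "t \<le> 2*h - 1"
  defines "a \<equiv> (4 * real h - 3) / (4 * real h - 1)"
  shows "real (Suc (4*h)) * (a - real (t - 1) * (1 - a)) > 1"
proof -
  define d where "d = 4 * real h - 1"
  have d: "d \<ge> 7" unfolding d_def using assms(1) by simp
  have a: "a = 1 - 2 / d" "1 - a = 2 / d"
    unfolding a_def d_def using d[unfolded d_def] by (simp_all add: field_simps)
  have "real (t - 1) \<le> (d - 3) / 2"
    using assms(2,3) by (simp add: d_def of_nat_diff)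
  then have "real (t - 1) * (1 - a) \<le> (d - 3) / 2 * (2 / d)"
    unfolding a(2) using d by (intro mult_right_mono) auto
  also have "\<dots> = (d - 3) / d"
    using d by (simp add: field_simps)
  finally have "real (t - 1) * (1 - a) \<le> (d - 3) / d" .
  moreover have "1 - 2 / d - (d - 3) / d = 1 / d"
    using d by (simp add: field_simps)
  ultimately have "a - real (t - 1) * (1 - a) \<ge> 1 / d"
    using a(1) by linarith
  then have "(d + 2) * (1 / d) \<le> (d + 2) * (a - real (t - 1) * (1 - a))"
    using d by (intro mult_left_mono) auto
  moreover have "(d + 2) * (1 / d) > 1"
    using d by (simp add: field_simps)
  moreover have "real (Suc (4*h)) = d + 2"
    by (simp add: d_def)
  ultimately show ?thesis by (metis less_le_trans)
qed

theorem mainTheorem8: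
  fixes M :: "'a measure" and B :: "'a \<Rightarrow> nat set"
    and h t :: nat and f :: "nat \<Rightarrow> nat"
  assumes "prob_space M"
    and "h \<ge> 2"
    and "1 \<le> t" and "t \<le> 2*h - 1"
    and "\<And>i. i < t \<Longrightarrow> f i > 0"
    and "(\<Sum>i<t. f i) \<le> 2*h"
    and "\<And>\<omega>. \<omega> \<in> space M \<Longrightarrow> B \<omega> \<subseteq> {1..}"
    and "\<And>n. n \<ge> 1 \<Longrightarrow> {\<omega> \<in> space M. n \<in> B \<omega>} \<in> sets M"
    and "prob_space.indep_events M (\<lambda>n. {\<omega> \<in> space M. n \<in> B \<omega>}) {1..}"
    and "\<And>n. n \<ge> 1 \<Longrightarrow> measure M {\<omega> \<in> space M. n \<in> B \<omega>}
            = real n powr (- (4 * real h - 3) / (4 * real h - 1))"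
  shows "AE \<omega> in M. \<forall>\<^sub>F n in sequentially. RDist (B \<omega>) f t n \<le> 4*h"
proof -
  interpret indep_random_set M B
    using assms(1,7,9) by (simp add: indep_random_set_def indep_random_set_axioms_def)
  define a where "a = (4 * real h - 3) / (4 * real h - 1)"
  have h: "real h \<ge> 2" using assms(2) by simp
  have a: "0 < a" "a < 1"
    unfolding a_def using h by (auto simp: field_simps)
  have "real (Suc (4*h)) * (a - real (t - 1) * (1 - a)) > 1"
    unfolding a_def using assms(2-4) by (rule exponent_gap_gt_one)
  moreover have "prob {\<omega> \<in> space M. n \<in> B \<omega>} = real n powr (-a)" if "n \<ge> 1" for n
    using assms(10)[OF that] by (simp add: a_def minus_divide_left)
  ultimately have "AE \<omega> in M. \<forall>\<^sub>F n in sequentially. RDist (B \<omega>) f t n < Suc (4*h)"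
    using a assms(3,5) by (intro AE_eventually_RDist_less) auto
  then show ?thesis by (simp add: less_Suc_eq_le)
qed

end
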